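(* Let $\Gamma$ be a $W$-generic metric graph, with $W:\Gamma\to\mathbb{R}$ of class $C^1$, and let $f_k$, $\lambda_k$ be the eigenfunctions and eigenvalues of $H_W=-\frac{\partial^2}{\partial x^2}+W$ with Dirichlet boundary and Neumann–Kirchhoff vertex conditions. Let $k_1<\dots<k_M$ and nonzero reals $a_1,\dots,a_M$ be given, and define $g(x,y)=\sum_{i=1}^{M}a_ie^{-\lambda_{k_i}y}f_{k_i}(x)$ for $x\in\Gamma$, $y\in\mathbb{R}$. Then $g$ has no isolated zero $(x_0,y_0)$ with $x_0$ in the interior of an edge.
   Context: A metric graph is connected with finitely many edges of finite length, each identified with an interval. $H_W$ acts edgewise on $\bigoplus_e H^2(e)$ with Dirichlet conditions at degree-one vertices and, at inner vertices (degree $\ge2$), continuity and vanishing sum of the outgoing derivatives. Eigenvalues $\lambda_1\le\lambda_2\le\dots$ are counted with multiplicity, with $L^2$-orthogonal eigenfunctions $f_k$. $\Gamma$ is $W$-generic if no eigenfunction of $H_W$ vanishes at an inner vertex. An isolated zero of $g$ is a zero $(x_0,y_0)$ having a neighbourhood in (edge interior)$\times\mathbb{R}$ containing no other zero of $g$. *)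

theory Defs
  imports "HOL-Analysis.Analysis"
begin

text \<open>A metric graph: finite vertex set V, finite nonempty edge set E, each edge e
  identified with the interval [0, L e], with x = 0 at vertex src e and x = L e at tgt e. Functions on the graph are edgewise:
  f :: 'e => real => real, only values on [0, L e] for e in E matter.\<close>

definition metric_graph ::
  "'v set \<Rightarrow> 'e set \<Rightarrow> ('e \<Rightarrow> 'v) \<Rightarrow> ('e \<Rightarrow> 'v) \<Rightarrow> ('e \<Rightarrow> real) \<Rightarrow> bool" where
  "metric_graph V E src tgt L \<longleftrightarrow>
     finite V \<and> finite E \<and> E \<noteq> {} \<and>
     (\<forall>e\<in>E. src e \<in> V \<and> tgt e \<in> V \<and> 0 < L e) \<and>
     (\<forall>u\<in>V. \<forall>w\<in>V. (u, w) \<in> ({(src e, tgt e) | e. e \<in> E} \<union> {(tgt e, src e) | e. e \<in> E})\<^sup>*)"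

text \<open>Degree of a vertex (a loop counts twice).\<close>
definition vdeg :: "'e set \<Rightarrow> ('e \<Rightarrow> 'v) \<Rightarrow> ('e \<Rightarrow> 'v) \<Rightarrow> 'v \<Rightarrow> nat" where
  "vdeg E src tgt v = card {e\<in>E. src e = v} + card {e\<in>E. tgt e = v}"

definition C1_potential :: "'e set \<Rightarrow> ('e \<Rightarrow> real) \<Rightarrow> ('e \<Rightarrow> real \<Rightarrow> real) \<Rightarrow> bool" where
  "C1_potential E L W \<longleftrightarrow>
     (\<forall>e\<in>E. \<exists>W'. continuous_on {0..L e} W' \<and>
        (\<forall>x\<in>{0..L e}. (W e has_real_derivative W' x) (at x within {0..L e})))"

text \<open>f is an eigenfunction of H_W = -d^2/dx^2 + W with eigenvalue mu, with Dirichlet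
  conditions at degree-one vertices and continuity + Kirchhoff conditions at inner vertices.
  d and d2 are the first and second (one-sided at the endpoints) derivatives on each edge.\<close>
definition is_eigenfunction ::
  "'v set \<Rightarrow> 'e set \<Rightarrow> ('e \<Rightarrow> 'v) \<Rightarrow> ('e \<Rightarrow> 'v) \<Rightarrow> ('e \<Rightarrow> real) \<Rightarrow>
   ('e \<Rightarrow> real \<Rightarrow> real) \<Rightarrow> real \<Rightarrow> ('e \<Rightarrow> real \<Rightarrow> real) \<Rightarrow> bool" where
  "is_eigenfunction V E src tgt L W mu f \<longleftrightarrow>
     (\<exists>d d2.
        (\<forall>e\<in>E. \<forall>x\<in>{0..L e}.
           (f e has_real_derivative d e x) (at x within {0..L e}) \<and>
           (d e has_real_derivative d2 e x) (at x within {0..L e}) \<and>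
           - d2 e x + W e x * f e x = mu * f e x) \<and>
        (\<forall>e\<in>E. \<forall>e'\<in>E.
           (src e = src e' \<longrightarrow> f e 0 = f e' 0) \<and>
           (src e = tgt e' \<longrightarrow> f e 0 = f e' (L e')) \<and>
           (tgt e = tgt e' \<longrightarrow> f e (L e) = f e' (L e'))) \<and>
        (\<forall>e\<in>E. (vdeg E src tgt (src e) = 1 \<longrightarrow> f e 0 = 0) \<and>
                (vdeg E src tgt (tgt e) = 1 \<longrightarrow> f e (L e) = 0)) \<and>
        (\<forall>v\<in>V. 2 \<le> vdeg E src tgt v \<longrightarrow>
           (\<Sum>e\<in>{e\<in>E. src e = v}. d e 0) - (\<Sum>e\<in>{e\<in>E. tgt e = v}. d e (L e)) = 0)) \<and>
     (\<exists>e\<in>E. \<exists>x\<in>{0..L e}. f e x \<noteq> 0)"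

definition vanishes_at_vertex ::
  "'e set \<Rightarrow> ('e \<Rightarrow> 'v) \<Rightarrow> ('e \<Rightarrow> 'v) \<Rightarrow> ('e \<Rightarrow> real) \<Rightarrow> ('e \<Rightarrow> real \<Rightarrow> real) \<Rightarrow> 'v \<Rightarrow> bool" where
  "vanishes_at_vertex E src tgt L f v \<longleftrightarrow>
     (\<exists>e\<in>E. (src e = v \<and> f e 0 = 0) \<or> (tgt e = v \<and> f e (L e) = 0))"

definition W_generic ::
  "'v set \<Rightarrow> 'e set \<Rightarrow> ('e \<Rightarrow> 'v) \<Rightarrow> ('e \<Rightarrow> 'v) \<Rightarrow> ('e \<Rightarrow> real) \<Rightarrow> ('e \<Rightarrow> real \<Rightarrow> real) \<Rightarrow> bool" where
  "W_generic V E src tgt L W \<longleftrightarrow>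
     (\<forall>mu f v. is_eigenfunction V E src tgt L W mu f \<longrightarrow> v \<in> V \<longrightarrow> 2 \<le> vdeg E src tgt v \<longrightarrow>
        \<not> vanishes_at_vertex E src tgt L f v)"

definition graph_inner :: "'e set \<Rightarrow> ('e \<Rightarrow> real) \<Rightarrow> ('e \<Rightarrow> real \<Rightarrow> real) \<Rightarrow> ('e \<Rightarrow> real \<Rightarrow> real) \<Rightarrow> real" where
  "graph_inner E L f g = (\<Sum>e\<in>E. integral {0..L e} (\<lambda>x. f e x * g e x))"

text \<open>lam, f enumerate the eigenvalues (nondecreasing, with multiplicity) and an
  L^2-orthonormal system of eigenfunctions: every eigenfunction with eigenvalue mu is a
  linear combination of the f k with lam k = mu.\<close>
definition eigen_system ::
  "'v set \<Rightarrow> 'e set \<Rightarrow> ('e \<Rightarrow> 'v) \<Rightarrow> ('e \<Rightarrow> 'v) \<Rightarrow> ('e \<Rightarrow> real) \<Rightarrow> ('e \<Rightarrow> real \<Rightarrow> real) \<Rightarrow>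
   (nat \<Rightarrow> real) \<Rightarrow> (nat \<Rightarrow> 'e \<Rightarrow> real \<Rightarrow> real) \<Rightarrow> bool" where
  "eigen_system V E src tgt L W lam f \<longleftrightarrow>
     mono lam \<and>
     (\<forall>k. is_eigenfunction V E src tgt L W (lam k) (f k)) \<and>
     (\<forall>j k. graph_inner E L (f j) (f k) = (if j = k then 1 else 0)) \<and>
     (\<forall>mu \<phi>. is_eigenfunction V E src tgt L W mu \<phi> \<longrightarrow>
        (\<exists>c. \<forall>e\<in>E. \<forall>x\<in>{0..L e}. \<phi> e x = (\<Sum>k\<in>{k. lam k = mu}. c k * f k e x)))"

definition isolated_zero_on_edge ::
  "('e \<Rightarrow> real) \<Rightarrow> ('e \<Rightarrow> real \<Rightarrow> real \<Rightarrow> real) \<Rightarrow> 'e \<Rightarrow> real \<Rightarrow> real \<Rightarrow> bool" where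
  "isolated_zero_on_edge L g e x0 y0 \<longleftrightarrow>
     0 < x0 \<and> x0 < L e \<and> g e x0 y0 = 0 \<and>
     (\<exists>\<epsilon>>0. \<forall>x y. 0 < x \<and> x < L e \<and> dist (x, y) (x0, y0) < \<epsilon> \<and> (x, y) \<noteq> (x0, y0)
        \<longrightarrow> g e x y \<noteq> 0)"

end

theory Submission
  imports Defs
begin

text \<open>On an edge, g(x,y) = \<Sum> a_k e^(-\<lambda>_k y) f_k(x) solves the heat equation
  g_y = g_xx - W g, because f_k'' = (W - \<lambda>_k) f_k. If (x0,y0) were an isolated zero, g would
  not vanish on the parabolic boundary of a small rectangle [x0-\<delta>,x0+\<delta>] \<times> [y0-\<delta>,y0].
  This boundary is connected, so g has a constant sign on it, and the parabolic maximum principle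
  carries that sign to (x0,y0), contradicting g(x0,y0) = 0.\<close>

definition parabolic_boundary :: "real \<Rightarrow> real \<Rightarrow> real \<Rightarrow> real \<Rightarrow> (real \<times> real) set" where
  "parabolic_boundary a b c d = {a, b} \<times> {c..d} \<union> {a..b} \<times> {c}"

lemma parabolic_boundary_subset:
  "a \<le> b \<Longrightarrow> c \<le> d \<Longrightarrow> parabolic_boundary a b c d \<subseteq> {a..b} \<times> {c..d}"
  by (auto simp: parabolic_boundary_def)

lemma compact_parabolic_boundary: "compact (parabolic_boundary a b c d)"
  unfolding parabolic_boundary_def
  by (intro compact_Un compact_Times) (auto intro: finite_imp_compact)

lemma connected_parabolic_boundary:
  assumes "a \<le> b" "c \<le> d"
  shows "connected (parabolic_boundary a b c d)"
proof -
  have left_bottom: "connected ({a} \<times> {c..d} \<union> {a..b} \<times> {c})"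
  proof (rule connected_Un)
    show "{a} \<times> {c..d} \<inter> {a..b} \<times> {c} \<noteq> {}"
      using assms by (auto simp: set_eq_iff)
  qed (auto intro!: connected_Times)
  have "connected (({a} \<times> {c..d} \<union> {a..b} \<times> {c}) \<union> {b} \<times> {c..d})"
  proof (rule connected_Un[OF left_bottom])
    show "({a} \<times> {c..d} \<union> {a..b} \<times> {c}) \<inter> {b} \<times> {c..d} \<noteq> {}"
      using assms by (auto simp: set_eq_iff)
  qed (auto intro!: connected_Times)
  moreover have "({a} \<times> {c..d} \<union> {a..b} \<times> {c}) \<union> {b} \<times> {c..d} = parabolic_boundary a b c d"
    unfolding parabolic_boundary_def by blast
  ultimately show ?thesis by simp
qed

lemma second_derivative_nonneg_at_min:
  fixes g :: "real \<Rightarrow> real"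
  assumes x: "x \<in> {a<..<b}"
    and g': "\<And>t. t \<in> {a<..<b} \<Longrightarrow> (g has_real_derivative g' t) (at t)"
    and g'': "(g' has_real_derivative g'') (at x)"
    and min: "\<And>t. t \<in> {a<..<b} \<Longrightarrow> g x \<le> g t"
  shows "0 \<le> g''"
proof (rule ccontr)
  assume "\<not> 0 \<le> g''"
  have "g' x = 0"
    by (rule DERIV_local_min[OF g'[OF x], of "min (x - a) (b - x)"]) (use x in \<open>auto intro!: min\<close>)
  then obtain d where d: "0 < d" "\<And>h. 0 < h \<Longrightarrow> h < d \<Longrightarrow> g' (x + h) < 0"
    using DERIV_neg_dec_right[OF g''] \<open>\<not> 0 \<le> g''\<close> by force
  define h where "h = min (d / 2) ((b - x) / 2)"
  have h: "0 < h" "h < d" "x + h < b"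
    using d x by (auto simp: h_def min_def field_simps)
  have "\<forall>t. x \<le> t \<and> t \<le> x + h \<longrightarrow> (g has_real_derivative g' t) (at t)"
    using h x by (auto intro!: g')
  then obtain z where z: "x < z" "z < x + h" "g (x + h) - g x = h * g' z"
    using MVT2[of x "x + h" g g'] h by auto
  have "g' z < 0"
    using d(2)[of "z - x"] z h by simp
  then have "g (x + h) < g x"
    using z(3) mult_pos_neg[OF h(1)] by fastforce
  then show False
    using min[of "x + h"] h x by simp
qed

lemma derivative_nonpos_at_right_min:
  fixes g :: "real \<Rightarrow> real"
  assumes g': "(g has_real_derivative D) (at y)" and "c < y"
    and min: "\<And>t. t \<in> {c..y} \<Longrightarrow> g y \<le> g t"
  shows "D \<le> 0"
proof (rule ccontr)
  assume "\<not> D \<le> 0"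
  then obtain d where d: "0 < d" "\<And>h. 0 < h \<Longrightarrow> h < d \<Longrightarrow> g (y - h) < g y"
    using DERIV_pos_inc_left[OF g'] by force
  define h where "h = min (d / 2) ((y - c) / 2)"
  have "0 < h" "h < d" "y - h \<in> {c..y}"
    using d \<open>c < y\<close> by (auto simp: h_def min_def field_simps)
  then show False
    using d(2) min by fastforce
qed

text \<open>At a minimum of w off the parabolic boundary, w_xx \<ge> 0 \<ge> w_y; the strictness
  hypothesis excludes this unless the minimum is positive.\<close>

lemma parabolic_minimum_principle:
  fixes w wx wxx wy :: "real \<Rightarrow> real \<Rightarrow> real"
  assumes "a < b" "c < d"
    and cont: "continuous_on ({a..b} \<times> {c..d}) (\<lambda>z. w (fst z) (snd z))"
    and dx: "\<And>x y. x \<in> {a<..<b} \<Longrightarrow> y \<in> {c<..d} \<Longrightarrow> ((\<lambda>x. w x y) has_real_derivative wx x y) (at x)"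
    and dxx: "\<And>x y. x \<in> {a<..<b} \<Longrightarrow> y \<in> {c<..d} \<Longrightarrow> ((\<lambda>x. wx x y) has_real_derivative wxx x y) (at x)"
    and dy: "\<And>x y. x \<in> {a<..<b} \<Longrightarrow> y \<in> {c<..d} \<Longrightarrow> ((\<lambda>y. w x y) has_real_derivative wy x y) (at y)"
    and strict: "\<And>x y. x \<in> {a<..<b} \<Longrightarrow> y \<in> {c<..d} \<Longrightarrow> w x y \<le> 0 \<Longrightarrow> wxx x y < wy x y"
    and pos: "\<And>x y. (x, y) \<in> parabolic_boundary a b c d \<Longrightarrow> 0 < w x y"
    and xy: "x \<in> {a..b}" "y \<in> {c..d}"
  shows "0 < w x y"
proof -
  obtain xp yp where p: "xp \<in> {a..b}" "yp \<in> {c..d}"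
    and min: "\<And>x y. x \<in> {a..b} \<Longrightarrow> y \<in> {c..d} \<Longrightarrow> w xp yp \<le> w x y"
    using continuous_attains_inf[OF compact_Times[OF compact_Icc compact_Icc] _ cont] \<open>a < b\<close> \<open>c < d\<close>
    by force
  have "0 < w xp yp"
  proof (cases "(xp, yp) \<in> parabolic_boundary a b c d")
    case True
    then show ?thesis using pos by blast
  next
    case False
    then have xp: "xp \<in> {a<..<b}" and yp: "yp \<in> {c<..d}"
      using p by (auto simp: parabolic_boundary_def)
    have "0 \<le> wxx xp yp"
    proof (rule second_derivative_nonneg_at_min[OF xp _ dxx[OF xp yp]])
      show "((\<lambda>x. w x yp) has_real_derivative wx t yp) (at t)" if "t \<in> {a<..<b}" for t
        using dx[OF that yp] .
      show "w xp yp \<le> w t yp" if "t \<in> {a<..<b}" for t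
        using min that yp by auto
    qed
    moreover have "wy xp yp \<le> 0"
      using yp p by (intro derivative_nonpos_at_right_min[OF dy[OF xp yp]] min) auto
    ultimately show ?thesis
      using strict[OF xp yp] by fastforce
  qed
  then show ?thesis
    using min[OF xy] by simp
qed

definition heat_solution ::
  "real \<Rightarrow> real \<Rightarrow> (real \<Rightarrow> real) \<Rightarrow> (real \<Rightarrow> real \<Rightarrow> real) \<Rightarrow> bool" where
  "heat_solution a b W G \<longleftrightarrow>
     continuous_on ({a<..<b} \<times> UNIV) (\<lambda>z. G (fst z) (snd z)) \<and>
     (\<exists>Gx Gxx Gy. \<forall>x\<in>{a<..<b}. \<forall>y.
        ((\<lambda>x. G x y) has_real_derivative Gx x y) (at x) \<and>
        ((\<lambda>x. Gx x y) has_real_derivative Gxx x y) (at x) \<and>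
        ((\<lambda>y. G x y) has_real_derivative Gy x y) (at y) \<and>
        Gy x y = Gxx x y - W x * G x y)"

lemma heat_solutionI:
  assumes "continuous_on ({a<..<b} \<times> UNIV) (\<lambda>z. G (fst z) (snd z))"
    and "\<And>x y. x \<in> {a<..<b} \<Longrightarrow> ((\<lambda>x. G x y) has_real_derivative Gx x y) (at x)"
    and "\<And>x y. x \<in> {a<..<b} \<Longrightarrow> ((\<lambda>x. Gx x y) has_real_derivative Gxx x y) (at x)"
    and "\<And>x y. x \<in> {a<..<b} \<Longrightarrow> ((\<lambda>y. G x y) has_real_derivative Gy x y) (at y)"
    and "\<And>x y. x \<in> {a<..<b} \<Longrightarrow> Gy x y = Gxx x y - W x * G x y"
  shows "heat_solution a b W G"
  unfolding heat_solution_def using assms by blast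

lemma heat_solutionE:
  assumes "heat_solution a b W G"
  obtains Gx Gxx Gy
  where "continuous_on ({a<..<b} \<times> UNIV) (\<lambda>z. G (fst z) (snd z))"
    and "\<And>x y. x \<in> {a<..<b} \<Longrightarrow> ((\<lambda>x. G x y) has_real_derivative Gx x y) (at x)"
    and "\<And>x y. x \<in> {a<..<b} \<Longrightarrow> ((\<lambda>x. Gx x y) has_real_derivative Gxx x y) (at x)"
    and "\<And>x y. x \<in> {a<..<b} \<Longrightarrow> ((\<lambda>y. G x y) has_real_derivative Gy x y) (at y)"
    and "\<And>x y. x \<in> {a<..<b} \<Longrightarrow> Gy x y = Gxx x y - W x * G x y"
  using assms unfolding heat_solution_def by blast

lemma heat_solution_uminus:
  assumes "heat_solution a b W G"
  shows "heat_solution a b W (\<lambda>x y. - G x y)"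
proof -
  obtain Gx Gxx Gy where cont: "continuous_on ({a<..<b} \<times> UNIV) (\<lambda>z. G (fst z) (snd z))"
    and Gx: "\<And>x y. x \<in> {a<..<b} \<Longrightarrow> ((\<lambda>x. G x y) has_real_derivative Gx x y) (at x)"
    and Gxx: "\<And>x y. x \<in> {a<..<b} \<Longrightarrow> ((\<lambda>x. Gx x y) has_real_derivative Gxx x y) (at x)"
    and Gy: "\<And>x y. x \<in> {a<..<b} \<Longrightarrow> ((\<lambda>y. G x y) has_real_derivative Gy x y) (at y)"
    and eq: "\<And>x y. x \<in> {a<..<b} \<Longrightarrow> Gy x y = Gxx x y - W x * G x y"
    using assms by (rule heat_solutionE) blast
  show ?thesis
  proof (rule heat_solutionI)
    show "continuous_on ({a<..<b} \<times> UNIV) (\<lambda>z. - G (fst z) (snd z))"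
      using cont by (rule continuous_on_minus)
    show "((\<lambda>x. - G x y) has_real_derivative - Gx x y) (at x)" if "x \<in> {a<..<b}" for x y
      using Gx[OF that] by (rule DERIV_minus)
    show "((\<lambda>x. - Gx x y) has_real_derivative - Gxx x y) (at x)" if "x \<in> {a<..<b}" for x y
      using Gxx[OF that] by (rule DERIV_minus)
    show "((\<lambda>y. - G x y) has_real_derivative - Gy x y) (at y)" if "x \<in> {a<..<b}" for x y
      using Gy[OF that] by (rule DERIV_minus)
    show "- Gy x y = - Gxx x y - W x * - G x y" if "x \<in> {a<..<b}" for x y
      using eq[OF that] by simp
  qed
qed

lemma heat_solution_exp_shift:
  assumes "heat_solution a b W G"
  shows "heat_solution a b (\<lambda>x. W x + B) (\<lambda>x y. exp (- B * y) * G x y)"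
proof -
  obtain Gx Gxx Gy where cont: "continuous_on ({a<..<b} \<times> UNIV) (\<lambda>z. G (fst z) (snd z))"
    and Gx: "\<And>x y. x \<in> {a<..<b} \<Longrightarrow> ((\<lambda>x. G x y) has_real_derivative Gx x y) (at x)"
    and Gxx: "\<And>x y. x \<in> {a<..<b} \<Longrightarrow> ((\<lambda>x. Gx x y) has_real_derivative Gxx x y) (at x)"
    and Gy: "\<And>x y. x \<in> {a<..<b} \<Longrightarrow> ((\<lambda>y. G x y) has_real_derivative Gy x y) (at y)"
    and eq: "\<And>x y. x \<in> {a<..<b} \<Longrightarrow> Gy x y = Gxx x y - W x * G x y"
    using assms by (rule heat_solutionE) blast
  show ?thesis
  proof (rule heat_solutionI)
    show "continuous_on ({a<..<b} \<times> UNIV) (\<lambda>z. exp (- B * snd z) * G (fst z) (snd z))"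
      by (intro continuous_intros cont)
    fix x y assume x: "x \<in> {a<..<b}"
    show "((\<lambda>x. exp (- B * y) * G x y) has_real_derivative exp (- B * y) * Gx x y) (at x)"
      by (intro DERIV_cmult Gx x)
    show "((\<lambda>x. exp (- B * y) * Gx x y) has_real_derivative exp (- B * y) * Gxx x y) (at x)"
      by (intro DERIV_cmult Gxx x)
    show "((\<lambda>y. exp (- B * y) * G x y) has_real_derivative
        exp (- B * y) * (Gy x y - B * G x y)) (at y)"
      by (auto intro!: derivative_eq_intros Gy[OF x] simp: algebra_simps)
    show "exp (- B * y) * (Gy x y - B * G x y) =
        exp (- B * y) * Gxx x y - (W x + B) * (exp (- B * y) * G x y)"
      unfolding eq[OF x] by (simp add: algebra_simps)
  qed
qed

lemma compact_pos_lower_bound: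
  fixes h :: "'a::topological_space \<Rightarrow> real"
  assumes "compact S" "continuous_on S h" "\<And>z. z \<in> S \<Longrightarrow> 0 < h z"
  obtains \<epsilon> where "0 < \<epsilon>" "\<And>z. z \<in> S \<Longrightarrow> \<epsilon> < h z"
proof (cases "S = {}")
  case True
  then show ?thesis using that[of 1] by simp
next
  case False
  then obtain zm where "zm \<in> S" "\<And>z. z \<in> S \<Longrightarrow> h zm \<le> h z"
    using continuous_attains_inf[OF assms(1) False assms(2)] by blast
  then show ?thesis
    using that[of "h zm / 2"] assms(3) by fastforce
qed

text \<open>For a nonnegative bounded potential, w = G - \<epsilon> e^(-Ay) is a strict supersolution wherever
  w \<le> 0, and it stays positive on the parabolic boundary for small \<epsilon> > 0.\<close>

lemma heat_maximum_principle_nonneg_potential: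
  assumes heat: "heat_solution a b V G"
    and rect: "a < a'" "a' < b'" "b' < b" "c < d"
    and V: "\<And>x. x \<in> {a'..b'} \<Longrightarrow> 0 \<le> V x" "\<And>x. x \<in> {a'..b'} \<Longrightarrow> V x < A"
    and pos: "\<And>x y. (x, y) \<in> parabolic_boundary a' b' c d \<Longrightarrow> 0 < G x y"
    and xy: "x \<in> {a'..b'}" "y \<in> {c..d}"
  shows "0 < G x y"
proof -
  obtain Gx Gxx Gy where cont: "continuous_on ({a<..<b} \<times> UNIV) (\<lambda>z. G (fst z) (snd z))"
    and Gx: "\<And>x y. x \<in> {a<..<b} \<Longrightarrow> ((\<lambda>x. G x y) has_real_derivative Gx x y) (at x)"
    and Gxx: "\<And>x y. x \<in> {a<..<b} \<Longrightarrow> ((\<lambda>x. Gx x y) has_real_derivative Gxx x y) (at x)"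
    and Gy: "\<And>x y. x \<in> {a<..<b} \<Longrightarrow> ((\<lambda>y. G x y) has_real_derivative Gy x y) (at y)"
    and eq: "\<And>x y. x \<in> {a<..<b} \<Longrightarrow> Gy x y = Gxx x y - V x * G x y"
    using heat by (rule heat_solutionE) blast
  have "{a'..b'} \<times> {c..d} \<subseteq> {a<..<b} \<times> UNIV"
    using rect by auto
  then have Gcont: "continuous_on ({a'..b'} \<times> {c..d}) (\<lambda>z. G (fst z) (snd z))"
    using cont by (rule continuous_on_subset[rotated])
  have "continuous_on (parabolic_boundary a' b' c d) (\<lambda>z. exp (A * snd z) * G (fst z) (snd z))"
    using rect by (intro continuous_intros continuous_on_subset[OF Gcont] parabolic_boundary_subset) auto
  moreover have "0 < exp (A * snd z) * G (fst z) (snd z)" if "z \<in> parabolic_boundary a' b' c d" for z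
    using pos[of "fst z" "snd z"] that by simp
  ultimately obtain \<epsilon> where "0 < \<epsilon>"
    and \<epsilon>: "\<And>z. z \<in> parabolic_boundary a' b' c d \<Longrightarrow> \<epsilon> < exp (A * snd z) * G (fst z) (snd z)"
    using compact_pos_lower_bound[OF compact_parabolic_boundary] by blast
  define w where "w x y = G x y - \<epsilon> * exp (- A * y)" for x y
  have "0 < w x y"
  proof (rule parabolic_minimum_principle[OF \<open>a' < b'\<close> \<open>c < d\<close> _ _ _ _ _ _ xy,
        where wx = Gx and wxx = Gxx and wy = "\<lambda>x y. Gy x y + A * (\<epsilon> * exp (- A * y))"])
    show "continuous_on ({a'..b'} \<times> {c..d}) (\<lambda>z. w (fst z) (snd z))"
      unfolding w_def by (intro continuous_intros Gcont)
  next
    fix x y assume "x \<in> {a'<..<b'}"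
    then have x: "x \<in> {a'..b'}" and xab: "x \<in> {a<..<b}"
      using rect by auto
    show "((\<lambda>x. w x y) has_real_derivative Gx x y) (at x)"
      unfolding w_def by (auto intro!: derivative_eq_intros Gx[OF xab])
    show "((\<lambda>x. Gx x y) has_real_derivative Gxx x y) (at x)"
      using Gxx[OF xab] .
    show "((\<lambda>y. w x y) has_real_derivative Gy x y + A * (\<epsilon> * exp (- A * y))) (at y)"
      unfolding w_def by (auto intro!: derivative_eq_intros Gy[OF xab] simp: algebra_simps)
    assume "w x y \<le> 0"
    then have "V x * G x y \<le> V x * (\<epsilon> * exp (- A * y))"
      using V(1)[OF x] by (intro mult_left_mono) (auto simp: w_def)
    moreover have "V x * (\<epsilon> * exp (- A * y)) < A * (\<epsilon> * exp (- A * y))"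
      using V(2)[OF x] \<open>0 < \<epsilon>\<close> by (intro mult_strict_right_mono) auto
    ultimately show "Gxx x y < Gy x y + A * (\<epsilon> * exp (- A * y))"
      unfolding eq[OF xab] by linarith
  next
    fix x y assume "(x, y) \<in> parabolic_boundary a' b' c d"
    then have "\<epsilon> < exp (A * y) * G x y"
      using \<epsilon> by fastforce
    then show "0 < w x y"
      by (simp add: w_def exp_minus field_simps)
  qed
  moreover have "0 < \<epsilon> * exp (- A * y)"
    using \<open>0 < \<epsilon>\<close> by simp
  ultimately show ?thesis
    unfolding w_def by linarith
qed

lemma heat_maximum_principle:
  assumes heat: "heat_solution a b W G" and Wcont: "continuous_on {a<..<b} W"
    and rect: "a < a'" "a' < b'" "b' < b" "c < d"
    and pos: "\<And>x y. (x, y) \<in> parabolic_boundary a' b' c d \<Longrightarrow> 0 < G x y"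
    and xy: "x \<in> {a'..b'}" "y \<in> {c..d}"
  shows "0 < G x y"
proof -
  have "bounded (W ` {a'..b'})"
    using rect by (intro compact_imp_bounded compact_continuous_image continuous_on_subset[OF Wcont]) auto
  then obtain M where M: "\<And>x. x \<in> {a'..b'} \<Longrightarrow> \<bar>W x\<bar> \<le> M"
    unfolding bounded_real by blast
  have "0 < exp (- M * y) * G x y"
  proof (rule heat_maximum_principle_nonneg_potential[OF heat_solution_exp_shift[OF heat] rect _ _ _ xy])
    show "0 \<le> W x + M" "W x + M < 2 * M + 1" if "x \<in> {a'..b'}" for x
      using M[OF that] by auto
    show "0 < exp (- M * y) * G x y" if "(x, y) \<in> parabolic_boundary a' b' c d" for x y
      using pos[OF that] by simp
  qed
  then show ?thesis
    by (simp add: zero_less_mult_iff)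
qed

lemma connected_nonvanishing_sign:
  fixes g :: "'a::topological_space \<Rightarrow> real"
  assumes "connected S" "continuous_on S g" "\<And>z. z \<in> S \<Longrightarrow> g z \<noteq> 0"
  shows "(\<forall>z\<in>S. 0 < g z) \<or> (\<forall>z\<in>S. g z < 0)"
proof (rule ccontr)
  assume "\<not> ?thesis"
  then obtain u v where "u \<in> S" "v \<in> S" "g u \<le> 0" "0 \<le> g v"
    by (meson not_less)
  moreover have "connected (g ` S)"
    using assms(1,2) by (rule connected_continuous_image[rotated])
  ultimately have "0 \<in> g ` S"
    unfolding connected_iff_interval by blast
  then show False
    using assms(3) by force
qed

lemma heat_solution_nonzero_in_rectangle:
  assumes heat: "heat_solution a b W G" and Wcont: "continuous_on {a<..<b} W"
    and rect: "a < a'" "a' < b'" "b' < b" "c < d"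
    and nz: "\<And>x y. (x, y) \<in> parabolic_boundary a' b' c d \<Longrightarrow> G x y \<noteq> 0"
    and xy: "x \<in> {a'..b'}" "y \<in> {c..d}"
  shows "G x y \<noteq> 0"
proof -
  define P where "P = parabolic_boundary a' b' c d"
  have "P \<subseteq> {a<..<b} \<times> UNIV"
    using parabolic_boundary_subset[of a' b' c d] rect unfolding P_def by fastforce
  then have "continuous_on P (\<lambda>z. G (fst z) (snd z))"
    using heat by (auto elim: heat_solutionE intro: continuous_on_subset)
  moreover have "connected P"
    using rect by (simp add: P_def connected_parabolic_boundary)
  moreover have "G (fst z) (snd z) \<noteq> 0" if "z \<in> P" for z
    using nz[of "fst z" "snd z"] that by (simp add: P_def)
  ultimately consider "\<forall>z\<in>P. 0 < G (fst z) (snd z)" | "\<forall>z\<in>P. G (fst z) (snd z) < 0"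
    using connected_nonvanishing_sign by blast
  then show ?thesis
  proof cases
    case 1
    then have "0 < G x y"
      by (intro heat_maximum_principle[OF heat Wcont rect _ xy]) (force simp: P_def)
    then show ?thesis by simp
  next
    case 2
    then have "0 < - G x y"
      by (intro heat_maximum_principle[OF heat_solution_uminus[OF heat] Wcont rect _ xy])
        (force simp: P_def)
    then show ?thesis by simp
  qed
qed

lemma heat_solution_no_isolated_zero:
  assumes heat: "heat_solution a b W G" and Wcont: "continuous_on {a<..<b} W"
    and x0: "x0 \<in> {a<..<b}" and "0 < \<epsilon>"
    and iso: "\<And>x y. x \<in> {a<..<b} \<Longrightarrow> dist (x, y) (x0, y0) < \<epsilon> \<Longrightarrow> (x, y) \<noteq> (x0, y0) \<Longrightarrow> G x y \<noteq> 0"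
  shows "G x0 y0 \<noteq> 0"
proof -
  define \<delta> where "\<delta> = min (\<epsilon> / 2) (min ((x0 - a) / 2) ((b - x0) / 2))"
  have "sqrt 2 < 2"
    using real_sqrt_less_iff[of 2 4] by simp
  then have "\<epsilon> / 2 < \<epsilon> / sqrt 2"
    using \<open>0 < \<epsilon>\<close> by (intro divide_strict_left_mono) auto
  moreover have "0 < \<delta>" "a < x0 - \<delta>" "x0 + \<delta> < b" "\<delta> \<le> \<epsilon> / 2"
    using x0 \<open>0 < \<epsilon>\<close> by (auto simp: \<delta>_def min_def field_simps)
  ultimately have \<delta>: "0 < \<delta>" "a < x0 - \<delta>" "x0 + \<delta> < b" "\<delta> < \<epsilon> / sqrt 2"
    by linarith+
  show ?thesis
  proof (rule heat_solution_nonzero_in_rectangle[OF heat Wcont, of "x0 - \<delta>" "x0 + \<delta>" "y0 - \<delta>" y0])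
    fix x y
    assume "(x, y) \<in> parabolic_boundary (x0 - \<delta>) (x0 + \<delta>) (y0 - \<delta>) y0"
    then have "\<bar>x - x0\<bar> \<le> \<delta>" "\<bar>y - y0\<bar> \<le> \<delta>" "(x, y) \<noteq> (x0, y0)"
      using \<delta> by (auto simp: parabolic_boundary_def)
    moreover from this have "dist (x, y) (x0, y0) < \<epsilon>"
      unfolding dist_Pair_Pair dist_real_def using \<delta>(4) by (intro real_sqrt_sum_squares_less) auto
    ultimately show "G x y \<noteq> 0"
      using \<delta> by (intro iso) auto
  qed (use \<delta> in auto)
qed

lemma C1_potential_continuous:
  "C1_potential E L W \<Longrightarrow> e \<in> E \<Longrightarrow> continuous_on {0..L e} (W e)"
  unfolding C1_potential_def by (metis DERIV_continuous_on)

lemma eigenfunction_edge_ode: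
  assumes "is_eigenfunction V E src tgt L W mu \<phi>" "e \<in> E"
  shows "\<exists>d d2. \<forall>x\<in>{0<..<L e}. (\<phi> e has_real_derivative d x) (at x) \<and>
           (d has_real_derivative d2 x) (at x) \<and> d2 x = (W e x - mu) * \<phi> e x"
proof -
  obtain d d2 where ode: "\<forall>x\<in>{0..L e}. (\<phi> e has_real_derivative d x) (at x within {0..L e}) \<and>
      (d has_real_derivative d2 x) (at x within {0..L e}) \<and> - d2 x + W e x * \<phi> e x = mu * \<phi> e x"
    using assms unfolding is_eigenfunction_def by blast
  have "(\<phi> e has_real_derivative d x) (at x) \<and> (d has_real_derivative d2 x) (at x) \<and>
      d2 x = (W e x - mu) * \<phi> e x" if "x \<in> {0<..<L e}" for x
  proof -
    have at: "at x within {0..L e} = at x"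
      using that by (simp add: at_within_Icc_at)
    from ode that have "(\<phi> e has_real_derivative d x) (at x within {0..L e})"
      "(d has_real_derivative d2 x) (at x within {0..L e})" "- d2 x + W e x * \<phi> e x = mu * \<phi> e x"
      by auto
    then show ?thesis
      unfolding at by (simp add: left_diff_distrib)
  qed
  then show ?thesis
    by blast
qed

lemma heat_solution_exp_combination:
  fixes \<phi> :: "nat \<Rightarrow> real \<Rightarrow> real"
  assumes "\<forall>k\<in>K. \<exists>d d2. \<forall>x\<in>{a<..<b}. (\<phi> k has_real_derivative d x) (at x) \<and>
             (d has_real_derivative d2 x) (at x) \<and> d2 x = (W x - lam k) * \<phi> k x"
  shows "heat_solution a b W (\<lambda>x y. \<Sum>k\<in>K. c k * exp (- lam k * y) * \<phi> k x)"
proof -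
  obtain d where "\<forall>k\<in>K. \<exists>d2. \<forall>x\<in>{a<..<b}. (\<phi> k has_real_derivative d k x) (at x) \<and>
      (d k has_real_derivative d2 x) (at x) \<and> d2 x = (W x - lam k) * \<phi> k x"
    using assms by (rule bchoice[THEN exE]) blast
  then obtain d2 where "\<forall>k\<in>K. \<forall>x\<in>{a<..<b}. (\<phi> k has_real_derivative d k x) (at x) \<and>
      (d k has_real_derivative d2 k x) (at x) \<and> d2 k x = (W x - lam k) * \<phi> k x"
    by (rule bchoice[THEN exE]) blast
  then have d: "\<And>k x. k \<in> K \<Longrightarrow> x \<in> {a<..<b} \<Longrightarrow> (\<phi> k has_real_derivative d k x) (at x)"
    and d2: "\<And>k x. k \<in> K \<Longrightarrow> x \<in> {a<..<b} \<Longrightarrow> (d k has_real_derivative d2 k x) (at x)"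
    and ode: "\<And>k x. k \<in> K \<Longrightarrow> x \<in> {a<..<b} \<Longrightarrow> d2 k x = (W x - lam k) * \<phi> k x"
    by blast+
  have "continuous_on {a<..<b} (\<phi> k)" if "k \<in> K" for k
    by (intro continuous_at_imp_continuous_on ballI DERIV_isCont[OF d[OF that]])
  then have cont: "continuous_on ({a<..<b} \<times> UNIV) (\<lambda>z. \<phi> k (fst z))" if "k \<in> K" for k
    by (rule continuous_on_compose2[OF _ continuous_on_fst[OF continuous_on_id]]) (use that in auto)
  show ?thesis
  proof (rule heat_solutionI)
    show "continuous_on ({a<..<b} \<times> UNIV)
        (\<lambda>z. \<Sum>k\<in>K. c k * exp (- lam k * snd z) * \<phi> k (fst z))"
      using cont by (intro continuous_intros)
    fix x y assume x: "x \<in> {a<..<b}"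
    show "((\<lambda>x. \<Sum>k\<in>K. c k * exp (- lam k * y) * \<phi> k x) has_real_derivative
        (\<Sum>k\<in>K. c k * exp (- lam k * y) * d k x)) (at x)"
      by (intro DERIV_sum DERIV_cmult d x)
    show "((\<lambda>x. \<Sum>k\<in>K. c k * exp (- lam k * y) * d k x) has_real_derivative
        (\<Sum>k\<in>K. c k * exp (- lam k * y) * d2 k x)) (at x)"
      by (intro DERIV_sum DERIV_cmult d2 x)
    show "((\<lambda>y. \<Sum>k\<in>K. c k * exp (- lam k * y) * \<phi> k x) has_real_derivative
        (\<Sum>k\<in>K. - lam k * c k * exp (- lam k * y) * \<phi> k x)) (at y)"
      by (intro DERIV_sum) (auto intro!: derivative_eq_intros)
    have "(\<Sum>k\<in>K. - lam k * c k * exp (- lam k * y) * \<phi> k x)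
        = (\<Sum>k\<in>K. c k * exp (- lam k * y) * d2 k x - W x * (c k * exp (- lam k * y) * \<phi> k x))"
      by (rule sum.cong) (simp_all add: ode[OF _ x] algebra_simps)
    then show "(\<Sum>k\<in>K. - lam k * c k * exp (- lam k * y) * \<phi> k x) =
        (\<Sum>k\<in>K. c k * exp (- lam k * y) * d2 k x) - W x * (\<Sum>k\<in>K. c k * exp (- lam k * y) * \<phi> k x)"
      by (simp add: sum_distrib_left sum_subtractf)
  qed
qed

theorem lemma6:
  fixes V :: "'v set" and E :: "'e set" and src tgt :: "'e \<Rightarrow> 'v" and L :: "'e \<Rightarrow> real"
    and W :: "'e \<Rightarrow> real \<Rightarrow> real"
    and lam :: "nat \<Rightarrow> real" and f :: "nat \<Rightarrow> 'e \<Rightarrow> real \<Rightarrow> real"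
    and K :: "nat set" and a :: "nat \<Rightarrow> real"
  assumes "metric_graph V E src tgt L"
    and "C1_potential E L W"
    and "W_generic V E src tgt L W"
    and "eigen_system V E src tgt L W lam f"
    and "finite K"
    and "\<forall>k\<in>K. a k \<noteq> 0"
  shows "\<not> (\<exists>e\<in>E. \<exists>x0 y0. isolated_zero_on_edge L
            (\<lambda>e x y. \<Sum>k\<in>K. a k * exp (- lam k * y) * f k e x) e x0 y0)"
proof
  assume "\<exists>e\<in>E. \<exists>x0 y0. isolated_zero_on_edge L
            (\<lambda>e x y. \<Sum>k\<in>K. a k * exp (- lam k * y) * f k e x) e x0 y0"
  then obtain e x0 y0 where e: "e \<in> E"
    and "isolated_zero_on_edge L (\<lambda>e x y. \<Sum>k\<in>K. a k * exp (- lam k * y) * f k e x) e x0 y0"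
    by blast
  moreover define g where "g x y = (\<Sum>k\<in>K. a k * exp (- lam k * y) * f k e x)" for x y
  ultimately obtain \<epsilon> where x0: "x0 \<in> {0<..<L e}" and "0 < \<epsilon>" and "g x0 y0 = 0"
    and iso: "\<And>x y. x \<in> {0<..<L e} \<Longrightarrow> dist (x, y) (x0, y0) < \<epsilon> \<Longrightarrow> (x, y) \<noteq> (x0, y0) \<Longrightarrow> g x y \<noteq> 0"
    unfolding isolated_zero_on_edge_def by auto
  have "heat_solution 0 (L e) (W e) g"
    unfolding g_def using assms(4) e
    by (intro heat_solution_exp_combination ballI eigenfunction_edge_ode) (auto simp: eigen_system_def)
  moreover have "continuous_on {0<..<L e} (W e)"
    using C1_potential_continuous[OF assms(2) e] by (rule continuous_on_subset) auto
  ultimately have "g x0 y0 \<noteq> 0"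
    using x0 \<open>0 < \<epsilon>\<close> iso by (rule heat_solution_no_isolated_zero)
  then show False
    using \<open>g x0 y0 = 0\<close> by contradiction
qed

end
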